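(* Let $y_1, \ldots, y_n \in \mathfrak m$ be a minimal system of generators of $\mathfrak m$, so $R = k[[y_1, \ldots, y_n]]$, and let $\widetilde y_1, \ldots, \widetilde y_n \in R$ be elements with $y_i \equiv \widetilde y_i \pmod{t^{a_n+1}}$ (i.e. $v(y_i - \widetilde y_i) \ge a_n + 1$) for all $i$. Then $R = k[[\widetilde y_1, \ldots, \widetilde y_n]]$.
   Context: Let $k$ be a field and let $(R,\mathfrak m)$ be a complete local noetherian domain of dimension $1$ containing $k$ with $R/\mathfrak m = k$, with normalization $\overline R$ having residue field $k$, so $\overline R = k[[t]]$ and $R \subseteq k[[t]]$ is finite birational. Let $v$ be the $t$-adic valuation, $v(0)=\infty$. For $A \subseteq k((t))$ let $v(A) = \{v(f): f\in A\setminus\{0\}\}$. The Herzog–Kunz sequence of $R$ is $v(\mathfrak m)\setminus v(\mathfrak m^2)$ listed increasingly as $a_1 < \cdots < a_n$ (with $n = \mathrm{edim}(R)$). For $y_i\in\mathfrak m$, $k[[y_1,\ldots,y_n]]$ is the image of $k[[Y_1,\ldots,Y_n]]\to k[[t]]$, $Y_i\mapsto y_i$. *)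

theory Defs
  imports "HOL-Computational_Algebra.Formal_Power_Series"
begin

text \<open>k[[t]] is modelled as the type 'a fps over a field 'a; the t-adic valuation
  of a nonzero series is subdegree.\<close>

definition val_set :: "'a::zero fps set \<Rightarrow> nat set" where
  "val_set A = {subdegree f | f. f \<in> A \<and> f \<noteq> 0}"

definition k_subalgebra :: "'a::field fps set \<Rightarrow> bool" where
  "k_subalgebra R \<longleftrightarrow> (\<forall>c. fps_const c \<in> R) \<and>
     (\<forall>f\<in>R. \<forall>g\<in>R. f + g \<in> R \<and> f * g \<in> R \<and> - f \<in> R)"

definition fps_finite_over :: "'a::field fps set \<Rightarrow> bool" where
  "fps_finite_over R \<longleftrightarrow> (\<exists>(N::nat) g. \<forall>f. \<exists>r. (\<forall>j<N. r j \<in> R) \<and> f = (\<Sum>j<N. r j * g j))"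

text \<open>R \<subseteq> k[[t]] is birational: same fraction field.\<close>
definition fps_birational :: "'a::field fps set \<Rightarrow> bool" where
  "fps_birational R \<longleftrightarrow> (\<forall>f. \<exists>a\<in>R. \<exists>b\<in>R. b \<noteq> 0 \<and> f * b = a)"

definition max_ideal :: "'a::field fps set \<Rightarrow> 'a fps set" where
  "max_ideal R = {f \<in> R. fps_nth f 0 = 0}"

definition ideal_sq :: "'a::field fps set \<Rightarrow> 'a fps set" where
  "ideal_sq M = {f. \<exists>(N::nat) a b. (\<forall>j<N. a j \<in> M \<and> b j \<in> M) \<and> f = (\<Sum>j<N. a j * b j)}"

definition generates :: "'a::field fps set \<Rightarrow> 'a fps set \<Rightarrow> nat \<Rightarrow> (nat \<Rightarrow> 'a fps) \<Rightarrow> bool" where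
  "generates R M n y \<longleftrightarrow> (\<forall>i<n. y i \<in> M) \<and>
     (\<forall>f\<in>M. \<exists>r. (\<forall>i<n. r i \<in> R) \<and> f = (\<Sum>i<n. r i * y i))"

definition minimal_generators :: "'a::field fps set \<Rightarrow> 'a fps set \<Rightarrow> nat \<Rightarrow> (nat \<Rightarrow> 'a fps) \<Rightarrow> bool" where
  "minimal_generators R M n y \<longleftrightarrow> generates R M n y \<and>
     (\<forall>n' z. generates R M n' z \<longrightarrow> n \<le> n')"

text \<open>Herzog--Kunz set v(m) minus v(m^2); its maximum is a_n.\<close>
definition HK_set :: "'a::field fps set \<Rightarrow> nat set" where
  "HK_set R = val_set (max_ideal R) - val_set (ideal_sq (max_ideal R))"

text \<open>Image of the substitution map k[[Y_0..Y_{n-1}]] \<rightarrow> k[[t]], Y_i \<mapsto> y i, for y i of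
  positive order.  A power series in n variables is a coefficient function c on
  exponent vectors alpha (only those supported in {..<n} matter); the t^m coefficient of
  sum c(alpha) y^alpha only involves |alpha| \<le> m.\<close>
definition psubst :: "nat \<Rightarrow> (nat \<Rightarrow> 'a::field fps) \<Rightarrow> ((nat \<Rightarrow> nat) \<Rightarrow> 'a) \<Rightarrow> 'a fps" where
  "psubst n y c = Abs_fps (\<lambda>m. \<Sum>\<alpha>\<in>{\<alpha>. (\<forall>i. n \<le> i \<longrightarrow> \<alpha> i = 0) \<and> (\<Sum>i<n. \<alpha> i) \<le> m}.
       c \<alpha> * fps_nth (\<Prod>i<n. y i ^ \<alpha> i) m)"

definition power_series_subalg :: "nat \<Rightarrow> (nat \<Rightarrow> 'a::field fps) \<Rightarrow> 'a fps set" where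
  "power_series_subalg n y = range (psubst n y)"

end

theory Submission
  imports Defs
begin

text \<open>Since \<open>k[[t]]\<close> is finite and birational over \<open>R\<close>, a common denominator gives
  \<open>t\<^sup>C k[[t]] \<subseteq> R\<close> for some \<open>C \<ge> 1\<close>. Then everything of order \<open>\<ge> 2C\<close> lies in
  \<open>m\<^sup>2\<close>, so the Herzog--Kunz sequence is finite, and an element of \<open>m\<close> of order \<open>> a\<^sub>n\<close>
  lies in \<open>m\<^sup>2\<close>: its leading term can be cancelled by an element of \<open>m\<^sup>2\<close> until the
  order reaches \<open>2C\<close>. Hence \<open>y\<^sub>i \<equiv> y'\<^sub>i\<close> modulo \<open>m\<^sup>2\<close>, and a \<open>t\<close>-adic Nakayama
  argument shows that the \<open>y'\<^sub>i\<close> generate \<open>m\<close> as an \<open>R\<close>-module. Expanding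
  \<open>f \<in> R\<close> repeatedly as \<open>f = f(0) + \<Sum>\<^sub>i r\<^sub>i y'\<^sub>i\<close> and likewise each \<open>r\<^sub>i\<close> yields a
  power series in the \<open>y'\<^sub>i\<close> converging \<open>t\<close>-adically to \<open>f\<close>. Conversely, every
  substitution lies in \<open>R\<close>, being a polynomial in the \<open>y'\<^sub>i\<close> modulo \<open>t\<^sup>C\<close>.\<close>

unbundle fps_syntax

section \<open>The \<open>t\<close>-adic order\<close>

definition order_ge :: "nat \<Rightarrow> 'a::zero fps \<Rightarrow> bool" where
  "order_ge j f \<longleftrightarrow> (\<forall>k<j. f $ k = 0)"

lemma order_ge_iff_subdegree: "order_ge j f \<longleftrightarrow> f = 0 \<or> j \<le> subdegree f"
proof
  show "order_ge j f \<Longrightarrow> f = 0 \<or> j \<le> subdegree f"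
    by (auto simp: order_ge_def intro: subdegree_geI)
  show "f = 0 \<or> j \<le> subdegree f \<Longrightarrow> order_ge j f"
    unfolding order_ge_def by (metis fps_zero_nth nth_less_subdegree_zero order_less_le_trans)
qed

lemma order_ge_0 [simp]: "order_ge 0 f"
  by (simp add: order_ge_def)

lemma order_ge_fps_zero [simp]: "order_ge j 0"
  by (simp add: order_ge_def)

lemma order_ge_mono: "i \<le> j \<Longrightarrow> order_ge j f \<Longrightarrow> order_ge i f"
  by (simp add: order_ge_def)

lemma order_ge_add:
  "order_ge j f \<Longrightarrow> order_ge j g \<Longrightarrow> order_ge j (f + g :: 'a::monoid_add fps)"
  by (simp add: order_ge_def)

lemma order_ge_sum:
  "(\<And>k. k \<in> S \<Longrightarrow> order_ge j (h k)) \<Longrightarrow> order_ge j (\<Sum>k\<in>S. h k)"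
  by (simp add: order_ge_def fps_sum_nth)

lemma order_ge_mult:
  fixes f g :: "'a::{comm_monoid_add, mult_zero} fps"
  assumes "order_ge a f" "order_ge b g"
  shows "order_ge (a + b) (f * g)"
  unfolding order_ge_def fps_mult_nth
proof (intro allI impI sum.neutral ballI)
  fix k i assume "k < a + b" "i \<in> {0..k}"
  then have "i < a \<or> k - i < b" by auto
  then show "f $ i * g $ (k - i) = 0"
    using assms by (auto simp: order_ge_def)
qed

lemma order_ge_prod:
  fixes g :: "'b \<Rightarrow> 'a::comm_semiring_1 fps"
  shows "(\<And>i. i \<in> S \<Longrightarrow> order_ge (d i) (g i)) \<Longrightarrow> order_ge (\<Sum>i\<in>S. d i) (\<Prod>i\<in>S. g i)"
  by (induction S rule: infinite_finite_induct) (auto intro: order_ge_mult)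

lemma order_ge_Suc_mult:
  fixes f g :: "'a::{comm_monoid_add, mult_zero} fps"
  shows "f $ 0 = 0 \<Longrightarrow> order_ge j g \<Longrightarrow> order_ge (Suc j) (f * g)"
  using order_ge_mult[of 1 f j g] by (simp add: order_ge_def)

lemma order_ge_power:
  "(f :: 'a::comm_semiring_1 fps) $ 0 = 0 \<Longrightarrow> order_ge k (f ^ k)"
  by (induction k) (auto intro: order_ge_Suc_mult)

lemma order_ge_prod_list:
  fixes z :: "'b \<Rightarrow> 'a::comm_semiring_1 fps"
  shows "(\<And>i. i \<in> set w \<Longrightarrow> z i $ 0 = 0) \<Longrightarrow> order_ge (length w) (prod_list (map z w))"
  by (induction w) (auto intro: order_ge_Suc_mult)

lemma order_ge_fps_X_power: "j \<le> k \<Longrightarrow> order_ge j (fps_X ^ k :: 'a::comm_semiring_1 fps)"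
  by (simp add: order_ge_def)

lemma dvd_if_order_ge:
  fixes b h :: "'a::field fps"
  assumes "b \<noteq> 0" "order_ge (subdegree b) h"
  shows "b dvd h"
  using assms fps_dvd_iff[of b h] by (cases "h = 0") (auto simp: order_ge_iff_subdegree)

lemma order_ge_cancel_leading:
  fixes f g :: "'a::field fps"
  assumes "g \<noteq> 0" "order_ge (subdegree g) f"
  shows "order_ge (Suc (subdegree g)) (f - fps_const (f $ subdegree g / g $ subdegree g) * g)"
  using assms unfolding order_ge_def by (auto simp: less_Suc_eq)

lemma k_subalgebra_const: "k_subalgebra R \<Longrightarrow> fps_const c \<in> R"
  by (simp add: k_subalgebra_def)

lemma k_subalgebra_0: "k_subalgebra R \<Longrightarrow> 0 \<in> R"
  using k_subalgebra_const[of R 0] by simp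

lemma k_subalgebra_1: "k_subalgebra R \<Longrightarrow> 1 \<in> R"
  using k_subalgebra_const[of R 1] by simp

lemma k_subalgebra_add: "k_subalgebra R \<Longrightarrow> f \<in> R \<Longrightarrow> g \<in> R \<Longrightarrow> f + g \<in> R"
  by (simp add: k_subalgebra_def)

lemma k_subalgebra_mult: "k_subalgebra R \<Longrightarrow> f \<in> R \<Longrightarrow> g \<in> R \<Longrightarrow> f * g \<in> R"
  by (simp add: k_subalgebra_def)

lemma k_subalgebra_diff: "k_subalgebra R \<Longrightarrow> f \<in> R \<Longrightarrow> g \<in> R \<Longrightarrow> f - g \<in> R"
  using k_subalgebra_add[of R f "- g"] by (simp add: k_subalgebra_def)

lemma k_subalgebra_sum:
  "k_subalgebra R \<Longrightarrow> (\<And>k. k \<in> S \<Longrightarrow> h k \<in> R) \<Longrightarrow> (\<Sum>k\<in>S. h k) \<in> R"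
  by (induction S rule: infinite_finite_induct) (auto simp: k_subalgebra_0 k_subalgebra_add)

lemma k_subalgebra_prod:
  "k_subalgebra R \<Longrightarrow> (\<And>k. k \<in> S \<Longrightarrow> h k \<in> R) \<Longrightarrow> (\<Prod>k\<in>S. h k) \<in> R"
  by (induction S rule: infinite_finite_induct) (auto simp: k_subalgebra_1 k_subalgebra_mult)

lemma k_subalgebra_power: "k_subalgebra R \<Longrightarrow> f \<in> R \<Longrightarrow> f ^ m \<in> R"
  by (induction m) (auto simp: k_subalgebra_1 k_subalgebra_mult)

lemma max_ideal_diff:
  "k_subalgebra R \<Longrightarrow> f \<in> max_ideal R \<Longrightarrow> g \<in> max_ideal R \<Longrightarrow> f - g \<in> max_ideal R"
  by (simp add: max_ideal_def k_subalgebra_diff)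

lemma max_ideal_mult_left:
  "k_subalgebra R \<Longrightarrow> a \<in> R \<Longrightarrow> f \<in> max_ideal R \<Longrightarrow> a * f \<in> max_ideal R"
  by (simp add: max_ideal_def k_subalgebra_mult)

section \<open>The conductor\<close>

definition conductor_bound :: "'a::field fps set \<Rightarrow> nat \<Rightarrow> bool" where
  "conductor_bound R C \<longleftrightarrow> (\<forall>h. order_ge C h \<longrightarrow> h \<in> R)"

lemma conductor_bound_mono: "C \<le> C' \<Longrightarrow> conductor_bound R C \<Longrightarrow> conductor_bound R C'"
  unfolding conductor_bound_def using order_ge_mono by blast

lemma common_denominator:
  assumes sa: "k_subalgebra R" and fin: "fps_finite_over R" and bir: "fps_birational R"
  obtains b where "b \<noteq> 0" "\<And>f. f * b \<in> R"
proof -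
  obtain N :: nat and g where g: "\<forall>f. \<exists>r. (\<forall>j<N. r j \<in> R) \<and> f = (\<Sum>j<N. r j * g j)"
    using fin unfolding fps_finite_over_def by blast
  have "\<forall>j. \<exists>a b. a \<in> R \<and> b \<in> R \<and> b \<noteq> 0 \<and> g j * b = a"
    using bir unfolding fps_birational_def by blast
  then obtain A B where AB: "\<And>j. A j \<in> R" "\<And>j. B j \<in> R" "\<And>j. B j \<noteq> 0" "\<And>j. g j * B j = A j"
    by metis
  define b where "b = (\<Prod>j<N. B j)"
  show thesis
  proof
    show "b \<noteq> 0" unfolding b_def using AB(3) by simp
  next
    fix f
    obtain r where r: "\<forall>j<N. r j \<in> R" "f = (\<Sum>j<N. r j * g j)" using g by blast
    have "f * b = (\<Sum>j<N. r j * g j * b)" unfolding r(2) by (simp add: sum_distrib_right)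
    also have "\<dots> = (\<Sum>j<N. r j * A j * (\<Prod>i\<in>{..<N} - {j}. B i))"
    proof (rule sum.cong[OF refl])
      fix j assume "j \<in> {..<N}"
      then have "b = B j * (\<Prod>i\<in>{..<N} - {j}. B i)"
        unfolding b_def by (rule prod.remove[OF finite_lessThan])
      then show "r j * g j * b = r j * A j * (\<Prod>i\<in>{..<N} - {j}. B i)"
        by (simp add: mult.assoc flip: AB(4))
    qed
    also have "\<dots> \<in> R"
      using r(1) AB
      by (intro k_subalgebra_sum[OF sa] k_subalgebra_mult[OF sa] k_subalgebra_prod[OF sa]) auto
    finally show "f * b \<in> R" .
  qed
qed

lemma conductor_bound_exists:
  assumes "k_subalgebra R" "fps_finite_over R" "fps_birational R"
  obtains C where "conductor_bound R C"
proof -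
  obtain b where b: "b \<noteq> 0" "\<And>f. f * b \<in> R" using common_denominator[OF assms] by blast
  have "h \<in> R" if h: "order_ge (subdegree b) h" for h
  proof -
    obtain q where "h = b * q" using dvd_if_order_ge[OF b(1) h] by blast
    then show ?thesis using b(2)[of q] by (simp add: mult.commute)
  qed
  then show thesis using that unfolding conductor_bound_def by blast
qed

lemma order_ge_in_max_ideal:
  "conductor_bound R C \<Longrightarrow> 1 \<le> C \<Longrightarrow> order_ge C f \<Longrightarrow> f \<in> max_ideal R"
  by (auto simp: conductor_bound_def max_ideal_def order_ge_def)

section \<open>The square of the maximal ideal\<close>

lemma ideal_sq_0: "0 \<in> ideal_sq M"
  unfolding ideal_sq_def by (intro CollectI exI[of _ 0]) simp

lemma ideal_sq_add_prod:
  assumes "f \<in> ideal_sq M" "a \<in> M" "b \<in> M"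
  shows "f + a * b \<in> ideal_sq M"
proof -
  obtain N :: nat and A B where AB: "\<forall>j<N. A j \<in> M \<and> B j \<in> M" "f = (\<Sum>j<N. A j * B j)"
    using assms(1) unfolding ideal_sq_def by blast
  have "\<forall>j<Suc N. (A(N := a)) j \<in> M \<and> (B(N := b)) j \<in> M" using AB(1) assms(2,3) by auto
  moreover have "f + a * b = (\<Sum>j<Suc N. (A(N := a)) j * (B(N := b)) j)"
    using AB(2) by simp
  ultimately show ?thesis
    unfolding ideal_sq_def by (intro CollectI exI[of _ "Suc N"] exI[of _ "A(N := a)"] exI[of _ "B(N := b)"]) simp
qed

lemma ideal_sq_add:
  assumes "f \<in> ideal_sq M" "g \<in> ideal_sq M"
  shows "f + g \<in> ideal_sq M"
proof -
  obtain N :: nat and A B where AB: "\<forall>j<N. A j \<in> M \<and> B j \<in> M" "g = (\<Sum>j<N. A j * B j)"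
    using assms(2) unfolding ideal_sq_def by blast
  have "f + (\<Sum>j<N'. A j * B j) \<in> ideal_sq M" if "N' \<le> N" for N'
    using that
  proof (induction N')
    case (Suc N')
    then have "f + (\<Sum>j<N'. A j * B j) + A N' * B N' \<in> ideal_sq M"
      using AB(1) by (intro ideal_sq_add_prod) auto
    then show ?case by (simp add: add.assoc)
  qed (simp add: assms(1))
  then show ?thesis using AB(2) by blast
qed

lemma ideal_sq_prod: "a \<in> M \<Longrightarrow> b \<in> M \<Longrightarrow> a * b \<in> ideal_sq M"
  using ideal_sq_add_prod[OF ideal_sq_0] by simp

lemma ideal_sq_mult_left:
  assumes "f \<in> ideal_sq M" "\<And>a. a \<in> M \<Longrightarrow> r * a \<in> M"
  shows "r * f \<in> ideal_sq M"
proof -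
  obtain N :: nat and A B where AB: "\<forall>j<N. A j \<in> M \<and> B j \<in> M" "f = (\<Sum>j<N. A j * B j)"
    using assms(1) unfolding ideal_sq_def by blast
  have "\<forall>j<N. r * A j \<in> M \<and> B j \<in> M" using AB(1) assms(2) by blast
  moreover have "r * f = (\<Sum>j<N. (r * A j) * B j)"
    unfolding AB(2) sum_distrib_left by (simp add: mult.assoc)
  ultimately show ?thesis
    unfolding ideal_sq_def by (intro CollectI exI[of _ N] exI[of _ "\<lambda>j. r * A j"] exI[of _ B]) simp
qed

lemma ideal_sq_max_ideal_subset:
  assumes sa: "k_subalgebra R"
  shows "ideal_sq (max_ideal R) \<subseteq> max_ideal R"
proof
  fix f assume "f \<in> ideal_sq (max_ideal R)"
  then obtain N :: nat and A B
    where AB: "\<forall>j<N. A j \<in> max_ideal R \<and> B j \<in> max_ideal R" "f = (\<Sum>j<N. A j * B j)"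
    unfolding ideal_sq_def by blast
  have "f \<in> R" unfolding AB(2) using AB(1)
    by (intro k_subalgebra_sum[OF sa] k_subalgebra_mult[OF sa]) (auto simp: max_ideal_def)
  moreover have "f $ 0 = 0" unfolding AB(2) fps_sum_nth using AB(1) by (simp add: max_ideal_def)
  ultimately show "f \<in> max_ideal R" by (simp add: max_ideal_def)
qed

lemma order_ge_in_ideal_sq:
  assumes cond: "conductor_bound R C" and C: "1 \<le> C" and f: "order_ge (2 * C) f"
  shows "f \<in> ideal_sq (max_ideal R)"
proof -
  have "order_ge C (fps_shift C f)" using f by (simp add: order_ge_def)
  moreover have "order_ge C (fps_X ^ C :: 'a fps)" by (simp add: order_ge_fps_X_power)
  ultimately have "fps_shift C f * fps_X ^ C \<in> ideal_sq (max_ideal R)"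
    using order_ge_in_max_ideal[OF cond C] by (intro ideal_sq_prod)
  moreover have "fps_shift C f * fps_X ^ C = f"
    using f by (cases "f = 0") (auto intro: fps_shift_times_fps_X_power simp: order_ge_iff_subdegree)
  ultimately show ?thesis by simp
qed

lemma HK_set_subset:
  assumes "conductor_bound R C" "1 \<le> C"
  shows "HK_set R \<subseteq> {..<2 * C}"
proof
  fix v assume v: "v \<in> HK_set R"
  show "v \<in> {..<2 * C}"
  proof (rule ccontr)
    assume "v \<notin> {..<2 * C}"
    then have "(fps_X ^ v :: 'a fps) \<in> ideal_sq (max_ideal R)"
      by (intro order_ge_in_ideal_sq[OF assms] order_ge_fps_X_power) simp
    then have "v \<in> val_set (ideal_sq (max_ideal R))"
      unfolding val_set_def by (intro CollectI exI[of _ "fps_X ^ v"]) (simp add: fps_X_power_subdegree)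
    then show False using v unfolding HK_set_def by blast
  qed
qed

lemma high_order_in_ideal_sq:
  assumes sa: "k_subalgebra R" and cond: "conductor_bound R C" and C: "1 \<le> C"
    and HK: "\<forall>v\<ge>v0. v \<notin> HK_set R"
    and "f \<in> max_ideal R" "order_ge v0 f"
  shows "f \<in> ideal_sq (max_ideal R)"
  using assms(5,6)
proof (induction "2 * C - subdegree f" arbitrary: f rule: less_induct)
  case less
  show ?case
  proof (cases "order_ge (2 * C) f")
    case True
    then show ?thesis by (rule order_ge_in_ideal_sq[OF cond C])
  next
    case False
    define v where "v = subdegree f"
    have f: "f \<noteq> 0" "v < 2 * C" "v0 \<le> v"
      using False less.prems(2) by (auto simp: order_ge_iff_subdegree v_def)
    have "v \<in> val_set (max_ideal R)"
      using less.prems(1) f(1) unfolding val_set_def v_def by blast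
    then have "v \<in> val_set (ideal_sq (max_ideal R))"
      using HK f(3) unfolding HK_set_def by blast
    then obtain g where g: "g \<in> ideal_sq (max_ideal R)" "g \<noteq> 0" "subdegree g = v"
      unfolding val_set_def by blast
    define cg where "cg = fps_const (f $ v / g $ v) * g"
    have cg: "cg \<in> ideal_sq (max_ideal R)"
      unfolding cg_def using g(1) max_ideal_mult_left[OF sa k_subalgebra_const[OF sa]]
      by (rule ideal_sq_mult_left)
    have h_order: "order_ge (Suc v) (f - cg)"
      unfolding cg_def using order_ge_cancel_leading[OF g(2), of f] g(3)
      by (simp add: order_ge_iff_subdegree v_def)
    have "f - cg \<in> ideal_sq (max_ideal R)"
    proof (cases "f - cg = 0")
      case False
      have "f - cg \<in> max_ideal R"
        using max_ideal_diff[OF sa less.prems(1)] cg ideal_sq_max_ideal_subset[OF sa] by blast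
      moreover have "2 * C - subdegree (f - cg) < 2 * C - subdegree f"
        using h_order False f(2) by (auto simp: order_ge_iff_subdegree v_def)
      moreover have "order_ge v0 (f - cg)" using order_ge_mono[OF _ h_order] f(3) by simp
      ultimately show ?thesis using less.hyps by blast
    qed (simp add: ideal_sq_0)
    then show ?thesis using ideal_sq_add[OF _ cg] by fastforce
  qed
qed

lemma close_to_generator:
  assumes sa: "k_subalgebra R" and cond: "conductor_bound R C" and C: "1 \<le> C"
    and y: "y \<in> max_ideal R" and z: "z \<in> R"
    and close: "y = z \<or> Max (HK_set R) + 1 \<le> subdegree (y - z)"
  shows "z \<in> max_ideal R" "y - z \<in> ideal_sq (max_ideal R)"
proof -
  from close consider "y = z" | "order_ge (Max (HK_set R) + 1) (y - z)"
    by (auto simp: order_ge_iff_subdegree)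
  then have "z \<in> max_ideal R \<and> y - z \<in> ideal_sq (max_ideal R)"
  proof cases
    case 2
    have "finite (HK_set R)" using HK_set_subset[OF cond C] finite_subset by blast
    then have HK: "\<forall>v\<ge>Max (HK_set R) + 1. v \<notin> HK_set R" using Max_ge by fastforce
    have "(y - z) $ 0 = 0" using 2 unfolding order_ge_def by simp
    then have "z \<in> max_ideal R" using y z by (simp add: max_ideal_def)
    moreover have "y - z \<in> max_ideal R" using max_ideal_diff[OF sa y calculation] .
    ultimately show ?thesis using high_order_in_ideal_sq[OF sa cond C HK _ 2] by blast
  qed (use y in \<open>simp add: ideal_sq_0\<close>)
  then show "z \<in> max_ideal R" "y - z \<in> ideal_sq (max_ideal R)" by blast+
qed

section \<open>Nakayama's lemma for perturbed generators\<close>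

definition rspan :: "'a::field fps set \<Rightarrow> nat \<Rightarrow> (nat \<Rightarrow> 'a fps) \<Rightarrow> 'a fps set" where
  "rspan R n z = {f. \<exists>r. (\<forall>i<n. r i \<in> R) \<and> f = (\<Sum>i<n. r i * z i)}"

lemma rspanI: "(\<forall>i<n. r i \<in> R) \<Longrightarrow> (\<Sum>i<n. r i * z i) \<in> rspan R n z"
  unfolding rspan_def by blast

lemma rspan_0: "k_subalgebra R \<Longrightarrow> 0 \<in> rspan R n z"
  using rspanI[of n "\<lambda>_. 0" R z] k_subalgebra_0[of R] by simp

lemma rspan_add:
  assumes sa: "k_subalgebra R" and "f \<in> rspan R n z" "g \<in> rspan R n z"
  shows "f + g \<in> rspan R n z"
proof -
  obtain r s where "\<forall>i<n. r i \<in> R" "f = (\<Sum>i<n. r i * z i)" "\<forall>i<n. s i \<in> R" "g = (\<Sum>i<n. s i * z i)"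
    using assms(2,3) unfolding rspan_def by blast
  then show ?thesis
    using rspanI[of n "\<lambda>i. r i + s i" R z] k_subalgebra_add[OF sa]
    by (simp add: distrib_right sum.distrib)
qed

lemma rspan_mult_left:
  assumes sa: "k_subalgebra R" and "a \<in> R" "f \<in> rspan R n z"
  shows "a * f \<in> rspan R n z"
proof -
  obtain r where "\<forall>i<n. r i \<in> R" "f = (\<Sum>i<n. r i * z i)"
    using assms(3) unfolding rspan_def by blast
  then show ?thesis
    using rspanI[of n "\<lambda>i. a * r i" R z] k_subalgebra_mult[OF sa assms(2)]
    by (simp add: sum_distrib_left mult.assoc)
qed

lemma rspan_generator:
  assumes sa: "k_subalgebra R" and "i < n" "a \<in> R"
  shows "a * z i \<in> rspan R n z"
proof -
  have "(\<Sum>j<n. (if j = i then a else 0) * z j) \<in> rspan R n z"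
    using assms k_subalgebra_0[OF sa] by (intro rspanI) auto
  moreover have "(\<Sum>j<n. (if j = i then a else 0) * z j) = (\<Sum>j<n. if j = i then a * z j else 0)"
    by (rule sum.cong) auto
  ultimately show ?thesis using assms(2) by simp
qed

definition approx_in_rspan :: "'a::field fps set \<Rightarrow> nat \<Rightarrow> (nat \<Rightarrow> 'a fps) \<Rightarrow> nat \<Rightarrow> 'a fps \<Rightarrow> bool"
  where "approx_in_rspan R n z j f \<longleftrightarrow> (\<exists>g\<in>rspan R n z. order_ge j (f - g))"

lemma approx_in_rspan_add:
  assumes sa: "k_subalgebra R" and "approx_in_rspan R n z j f" "approx_in_rspan R n z j g"
  shows "approx_in_rspan R n z j (f + g)"
proof -
  obtain a b where "a \<in> rspan R n z" "order_ge j (f - a)" "b \<in> rspan R n z" "order_ge j (g - b)"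
    using assms(2,3) unfolding approx_in_rspan_def by blast
  moreover have "f + g - (a + b) = (f - a) + (g - b)" by simp
  ultimately show ?thesis
    unfolding approx_in_rspan_def using rspan_add[OF sa] order_ge_add by metis
qed

lemma approx_in_rspan_sum:
  assumes sa: "k_subalgebra R"
  shows "(\<And>k. k \<in> S \<Longrightarrow> approx_in_rspan R n z j (h k)) \<Longrightarrow> approx_in_rspan R n z j (\<Sum>k\<in>S. h k)"
proof (induction S rule: infinite_finite_induct)
  case (insert x F)
  then show ?case using approx_in_rspan_add[OF sa] by simp
qed (use rspan_0[OF sa] in \<open>force simp: approx_in_rspan_def\<close>)+

lemma approx_in_rspan_mult:
  assumes sa: "k_subalgebra R" and a: "a \<in> max_ideal R" and f: "approx_in_rspan R n z j f"
  shows "approx_in_rspan R n z (Suc j) (a * f)"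
proof -
  obtain g where g: "g \<in> rspan R n z" "order_ge j (f - g)"
    using f unfolding approx_in_rspan_def by blast
  have "order_ge (Suc j) (a * (f - g))"
    using a g(2) by (intro order_ge_Suc_mult) (simp add: max_ideal_def)
  moreover have "a * g \<in> rspan R n z" using a g(1) rspan_mult_left[OF sa] by (simp add: max_ideal_def)
  ultimately show ?thesis unfolding approx_in_rspan_def by (metis right_diff_distrib)
qed

text \<open>The \<open>t\<close>-adic form of Nakayama's lemma: since \<open>y\<^sub>i \<equiv> z\<^sub>i\<close> modulo \<open>m\<^sup>2\<close>, every
  approximation of elements of \<open>m\<close> by the \<open>z\<^sub>i\<close> can be improved by one order.\<close>
lemma max_ideal_approx_in_rspan:
  assumes sa: "k_subalgebra R" and gen: "generates R (max_ideal R) n y"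
    and close: "\<forall>i<n. y i - z i \<in> ideal_sq (max_ideal R)"
  shows "f \<in> max_ideal R \<Longrightarrow> approx_in_rspan R n z j f"
proof (induction j arbitrary: f)
  case 0
  then show ?case using rspan_0[OF sa] unfolding approx_in_rspan_def by force
next
  case (Suc j)
  have sq: "approx_in_rspan R n z (Suc j) g" if g: "g \<in> ideal_sq (max_ideal R)" for g
  proof -
    obtain N :: nat and A B
      where AB: "\<forall>k<N. A k \<in> max_ideal R \<and> B k \<in> max_ideal R" "g = (\<Sum>k<N. A k * B k)"
      using g unfolding ideal_sq_def by blast
    then show ?thesis
      using approx_in_rspan_mult[OF sa] Suc.IH by (auto intro: approx_in_rspan_sum[OF sa])
  qed
  obtain r where r: "\<forall>i<n. r i \<in> R" "f = (\<Sum>i<n. r i * y i)"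
    using gen Suc.prems unfolding generates_def by blast
  have "f = (\<Sum>i<n. r i * z i) + (\<Sum>i<n. r i * (y i - z i))"
    unfolding r(2) by (simp add: sum.distrib[symmetric] algebra_simps)
  moreover have "approx_in_rspan R n z (Suc j) (\<Sum>i<n. r i * z i)"
    using rspanI[OF r(1)] unfolding approx_in_rspan_def by force
  moreover have "approx_in_rspan R n z (Suc j) (\<Sum>i<n. r i * (y i - z i))"
    using r(1) close max_ideal_mult_left[OF sa]
    by (intro approx_in_rspan_sum[OF sa] sq ideal_sq_mult_left) auto
  ultimately show ?case using approx_in_rspan_add[OF sa] by metis
qed

lemma approx_in_rspan_imp_mem:
  assumes sa: "k_subalgebra R" and cond: "conductor_bound R C"
    and i: "i < n" "z i \<noteq> 0" and f: "approx_in_rspan R n z (subdegree (z i) + C) f"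
  shows "f \<in> rspan R n z"
proof -
  obtain g where g: "g \<in> rspan R n z" "order_ge (subdegree (z i) + C) (f - g)"
    using f unfolding approx_in_rspan_def by blast
  then obtain q where q: "f - g = z i * q"
    using dvd_if_order_ge[OF i(2)] order_ge_mono by (metis dvdE le_add1)
  have "order_ge C q"
    using g(2) i(2) unfolding q by (cases "q = 0") (auto simp: order_ge_iff_subdegree)
  then have "q * z i \<in> rspan R n z"
    using cond rspan_generator[OF sa i(1)] unfolding conductor_bound_def by blast
  then have "g + q * z i \<in> rspan R n z" by (rule rspan_add[OF sa g(1)])
  moreover have "f = g + q * z i" using q by (simp add: algebra_simps)
  ultimately show ?thesis by simp
qed

lemma max_ideal_subset_rspan:
  assumes sa: "k_subalgebra R" and cond: "conductor_bound R C" and C: "1 \<le> C"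
    and gen: "generates R (max_ideal R) n y"
    and close: "\<forall>i<n. y i - z i \<in> ideal_sq (max_ideal R)"
  shows "max_ideal R \<subseteq> rspan R n z"
proof -
  note approx = max_ideal_approx_in_rspan[OF sa gen close]
  have "(fps_X ^ C :: 'a fps) \<in> max_ideal R"
    by (intro order_ge_in_max_ideal[OF cond C] order_ge_fps_X_power) simp
  then obtain g where g: "g \<in> rspan R n z" "order_ge (Suc C) (fps_X ^ C - g)"
    using approx unfolding approx_in_rspan_def by blast
  then have "g \<noteq> 0" unfolding order_ge_def by fastforce
  then obtain i where i: "i < n" "z i \<noteq> 0"
    using g(1) unfolding rspan_def by (fastforce intro: sum.neutral)
  show ?thesis using approx_in_rspan_imp_mem[of R C i n z, OF sa cond i] approx by blast
qed

section \<open>Substitution into power series\<close>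

definition subst_monom :: "nat \<Rightarrow> (nat \<Rightarrow> 'a::comm_semiring_1 fps) \<Rightarrow> (nat \<Rightarrow> nat) \<Rightarrow> 'a fps" where
  "subst_monom n z \<alpha> = (\<Prod>i<n. z i ^ \<alpha> i)"

definition exponents :: "nat \<Rightarrow> nat \<Rightarrow> (nat \<Rightarrow> nat) set" where
  "exponents n m = {\<alpha>. (\<forall>i\<ge>n. \<alpha> i = 0) \<and> (\<Sum>i<n. \<alpha> i) \<le> m}"

lemma psubst_nth: "psubst n z c $ m = (\<Sum>\<alpha>\<in>exponents n m. c \<alpha> * subst_monom n z \<alpha> $ m)"
  unfolding psubst_def exponents_def subst_monom_def by simp

lemma finite_exponents: "finite (exponents n m)"
proof (rule finite_subset)
  show "exponents n m \<subseteq> {\<alpha>. \<forall>i. (i \<in> {..<n} \<longrightarrow> \<alpha> i \<in> {..m}) \<and> (i \<notin> {..<n} \<longrightarrow> \<alpha> i = 0)}"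
  proof (clarsimp simp: exponents_def)
    fix \<alpha> i assume \<alpha>: "sum \<alpha> {..<n} \<le> m" and i: "i < n"
    have "\<alpha> i \<le> sum \<alpha> {..<n}" using i by (intro member_le_sum) auto
    then show "\<alpha> i \<le> m" using \<alpha> by simp
  qed
qed (rule finite_set_of_finite_funs; simp)

lemma order_ge_subst_monom:
  "(\<And>i. i < n \<Longrightarrow> z i $ 0 = 0) \<Longrightarrow> order_ge (\<Sum>i<n. \<alpha> i) (subst_monom n z \<alpha>)"
  unfolding subst_monom_def by (intro order_ge_prod order_ge_power) simp

lemma psubst_mem:
  assumes sa: "k_subalgebra R" and cond: "conductor_bound R C"
    and zR: "\<forall>i<n. z i \<in> R" and z0: "\<forall>i<n. z i $ 0 = 0"
  shows "psubst n z c \<in> R"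
proof -
  define P where "P = (\<Sum>\<alpha>\<in>exponents n C. fps_const (c \<alpha>) * subst_monom n z \<alpha>)"
  have "P \<in> R" unfolding P_def subst_monom_def using zR
    by (intro k_subalgebra_sum[OF sa] k_subalgebra_mult[OF sa] k_subalgebra_const[OF sa]
        k_subalgebra_prod[OF sa] k_subalgebra_power[OF sa]) auto
  have "psubst n z c $ m = P $ m" if m: "m < C" for m
  proof -
    have "psubst n z c $ m = (\<Sum>\<alpha>\<in>exponents n C. c \<alpha> * subst_monom n z \<alpha> $ m)"
      unfolding psubst_nth
    proof (rule sum.mono_neutral_left[OF finite_exponents])
      show "exponents n m \<subseteq> exponents n C" using m unfolding exponents_def by auto
      show "\<forall>\<alpha>\<in>exponents n C - exponents n m. c \<alpha> * subst_monom n z \<alpha> $ m = 0"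
      proof
        fix \<alpha> assume "\<alpha> \<in> exponents n C - exponents n m"
        then have "m < (\<Sum>i<n. \<alpha> i)" unfolding exponents_def by auto
        moreover have "order_ge (\<Sum>i<n. \<alpha> i) (subst_monom n z \<alpha>)"
          using z0 by (intro order_ge_subst_monom) auto
        ultimately show "c \<alpha> * subst_monom n z \<alpha> $ m = 0" unfolding order_ge_def by simp
      qed
    qed
    then show ?thesis unfolding P_def by (simp add: fps_sum_nth)
  qed
  then have "psubst n z c - P \<in> R"
    using cond unfolding conductor_bound_def order_ge_def by simp
  then show ?thesis using k_subalgebra_add[OF sa \<open>P \<in> R\<close>] by fastforce
qed

definition words :: "nat \<Rightarrow> nat \<Rightarrow> nat list set" where
  "words n j = {w. set w \<subseteq> {..<n} \<and> length w = j}"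

definition word_monom :: "(nat \<Rightarrow> 'a::comm_semiring_1 fps) \<Rightarrow> nat list \<Rightarrow> 'a fps" where
  "word_monom z w = prod_list (map z w)"

lemma words_0: "words n 0 = {[]}"
  unfolding words_def by auto

lemma words_Suc: "words n (Suc j) = (\<lambda>(w, i). i # w) ` (words n j \<times> {..<n})"
  unfolding words_def by (rule lists_length_Suc_eq)

lemma word_monom_Cons: "word_monom z (i # w) = z i * word_monom z w"
  by (simp add: word_monom_def)

lemma word_monom_eq_subst_monom:
  "set w \<subseteq> {..<n} \<Longrightarrow> word_monom z w = subst_monom n z (count_list w)"
proof (induction w)
  case (Cons i w)
  then have i: "i \<in> {..<n}" by simp
  have "subst_monom n z (count_list (i # w)) =
      z i ^ Suc (count_list w i) * (\<Prod>j\<in>{..<n} - {i}. z j ^ count_list w j)"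
    unfolding subst_monom_def by (simp add: prod.remove[OF finite_lessThan i])
  also have "\<dots> = z i * subst_monom n z (count_list w)"
    unfolding subst_monom_def by (simp add: prod.remove[OF finite_lessThan i] mult.assoc)
  finally show ?case using Cons by (simp add: word_monom_Cons del: count_list.simps)
qed (simp add: word_monom_def subst_monom_def)

text \<open>Given a choice \<open>d\<close> of coefficients writing each element of \<open>m\<close> as
  \<open>\<Sum>\<^sub>i d g i \<cdot> z\<^sub>i\<close>, this is the Horner-type expansion of \<open>f\<close> along words:
  \<open>r\<^sub>w - r\<^sub>w(0) = \<Sum>\<^sub>i r\<^sub>i\<^sub>#\<^sub>w \<cdot> z\<^sub>i\<close>.\<close>
primrec word_coeff :: "('a::field fps \<Rightarrow> nat \<Rightarrow> 'a fps) \<Rightarrow> 'a fps \<Rightarrow> nat list \<Rightarrow> 'a fps" where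
  "word_coeff d f [] = f"
| "word_coeff d f (i # w) = d (word_coeff d f w - fps_const (word_coeff d f w $ 0)) i"

context
  fixes R :: "'a::field fps set" and n :: nat and z :: "nat \<Rightarrow> 'a fps"
    and d :: "'a fps \<Rightarrow> nat \<Rightarrow> 'a fps"
  assumes sa: "k_subalgebra R"
    and d: "\<And>g. g \<in> max_ideal R \<Longrightarrow> (\<forall>i<n. d g i \<in> R) \<and> g = (\<Sum>i<n. d g i * z i)"
begin

lemma word_coeff_mem: "f \<in> R \<Longrightarrow> set w \<subseteq> {..<n} \<Longrightarrow> word_coeff d f w \<in> R"
proof (induction w)
  case (Cons i w)
  then have "word_coeff d f w - fps_const (word_coeff d f w $ 0) \<in> max_ideal R"
    using k_subalgebra_diff[OF sa _ k_subalgebra_const[OF sa]] by (simp add: max_ideal_def)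
  then show ?case using d Cons.prems(2) by simp
qed simp

lemma sum_words_Suc:
  assumes "f \<in> R"
  shows "(\<Sum>w\<in>words n (Suc j). word_coeff d f w * word_monom z w) =
    (\<Sum>w\<in>words n j. (word_coeff d f w - fps_const (word_coeff d f w $ 0)) * word_monom z w)"
proof -
  have "(\<Sum>w\<in>words n (Suc j). word_coeff d f w * word_monom z w) =
      (\<Sum>(w, i)\<in>words n j \<times> {..<n}. word_coeff d f (i # w) * word_monom z (i # w))"
    unfolding words_Suc
    by (subst sum.reindex) (auto simp: inj_on_def case_prod_unfold simp del: word_coeff.simps)
  also have "\<dots> = (\<Sum>w\<in>words n j. (\<Sum>i<n. word_coeff d f (i # w) * z i) * word_monom z w)"
    by (simp add: sum.cartesian_product[symmetric] sum_distrib_right word_monom_Cons mult.assoc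
        del: word_coeff.simps)
  also have "\<dots> = (\<Sum>w\<in>words n j. (word_coeff d f w - fps_const (word_coeff d f w $ 0)) * word_monom z w)"
  proof (intro sum.cong refl)
    fix w assume "w \<in> words n j"
    then have "word_coeff d f w - fps_const (word_coeff d f w $ 0) \<in> max_ideal R"
      using word_coeff_mem[OF assms] k_subalgebra_diff[OF sa _ k_subalgebra_const[OF sa]]
      by (simp add: max_ideal_def words_def)
    then show "(\<Sum>i<n. word_coeff d f (i # w) * z i) * word_monom z w =
        (word_coeff d f w - fps_const (word_coeff d f w $ 0)) * word_monom z w"
      using d by simp
  qed
  finally show ?thesis .
qed

lemma word_expansion:
  assumes "f \<in> R"
  shows "f = (\<Sum>i<j. \<Sum>w\<in>words n i. fps_const (word_coeff d f w $ 0) * word_monom z w)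
    + (\<Sum>w\<in>words n j. word_coeff d f w * word_monom z w)"
proof (induction j)
  case 0
  then show ?case by (simp add: words_0 word_monom_def)
next
  case (Suc j)
  have "(\<Sum>w\<in>words n j. word_coeff d f w * word_monom z w) =
      (\<Sum>w\<in>words n j. fps_const (word_coeff d f w $ 0) * word_monom z w)
      + (\<Sum>w\<in>words n (Suc j). word_coeff d f w * word_monom z w)"
    unfolding sum_words_Suc[OF assms] sum.distrib[symmetric] by (simp add: algebra_simps)
  then show ?case using Suc.IH by (simp add: add.assoc)
qed

end

lemma psubst_eq_word_sum:
  "psubst n z (\<lambda>\<alpha>. \<Sum>w\<in>{w\<in>words n (\<Sum>i<n. \<alpha> i). count_list w = \<alpha>}. a w) $ m =
    (\<Sum>j\<le>m. \<Sum>w\<in>words n j. a w * word_monom z w $ m)"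
proof -
  define L where "L = {w. set w \<subseteq> {..<n} \<and> length w \<le> m}"
  have L: "finite L" unfolding L_def by (rule finite_lists_length_le) simp
  have count: "count_list w \<in> exponents n m" if "w \<in> L" for w
    using that sum_count_set[of w "{..<n}"] by (auto simp: L_def exponents_def intro: count_notin)
  have "(\<Sum>j\<le>m. \<Sum>w\<in>words n j. a w * word_monom z w $ m) =
      (\<Sum>j\<le>m. \<Sum>w\<in>{w\<in>L. length w = j}. a w * word_monom z w $ m)"
    by (intro sum.cong refl) (auto simp: L_def words_def)
  also have "\<dots> = (\<Sum>w\<in>L. a w * word_monom z w $ m)"
    by (rule sum.group[OF L finite_atMost]) (auto simp: L_def)
  also have "\<dots> = (\<Sum>\<alpha>\<in>exponents n m. \<Sum>w\<in>{w\<in>L. count_list w = \<alpha>}. a w * word_monom z w $ m)"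
    using count by (intro sum.group[OF L finite_exponents, symmetric]) blast
  also have "\<dots> = (\<Sum>\<alpha>\<in>exponents n m.
      (\<Sum>w\<in>{w\<in>words n (\<Sum>i<n. \<alpha> i). count_list w = \<alpha>}. a w) * subst_monom n z \<alpha> $ m)"
  proof (intro sum.cong refl)
    fix \<alpha> assume \<alpha>: "\<alpha> \<in> exponents n m"
    define W where "W = {w\<in>words n (\<Sum>i<n. \<alpha> i). count_list w = \<alpha>}"
    have "{w\<in>L. count_list w = \<alpha>} = W"
    proof (intro set_eqI iffI)
      fix w assume w: "w \<in> {w\<in>L. count_list w = \<alpha>}"
      then have "length w = (\<Sum>i<n. \<alpha> i)" using sum_count_set[of w "{..<n}"] by (simp add: L_def)
      then show "w \<in> W" using w by (simp add: W_def L_def words_def)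
    next
      fix w assume "w \<in> W"
      then show "w \<in> {w\<in>L. count_list w = \<alpha>}"
        using \<alpha> by (simp add: W_def L_def words_def exponents_def)
    qed
    moreover have "(\<Sum>w\<in>W. a w * word_monom z w $ m) = (\<Sum>w\<in>W. a w) * subst_monom n z \<alpha> $ m"
      unfolding sum_distrib_right
    proof (intro sum.cong refl)
      fix w assume "w \<in> W"
      then show "a w * word_monom z w $ m = a w * subst_monom n z \<alpha> $ m"
        using word_monom_eq_subst_monom[of w n z] by (simp add: W_def words_def)
    qed
    ultimately show "(\<Sum>w\<in>{w\<in>L. count_list w = \<alpha>}. a w * word_monom z w $ m) =
        (\<Sum>w\<in>{w\<in>words n (\<Sum>i<n. \<alpha> i). count_list w = \<alpha>}. a w) * subst_monom n z \<alpha> $ m"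
      by (simp add: W_def)
  qed
  finally show ?thesis by (simp add: psubst_nth)
qed

lemma mem_range_psubst:
  assumes sa: "k_subalgebra R" and span: "max_ideal R \<subseteq> rspan R n z"
    and z0: "\<forall>i<n. z i $ 0 = 0" and f: "f \<in> R"
  shows "f \<in> range (psubst n z)"
proof -
  have "\<forall>g\<in>max_ideal R. \<exists>r. (\<forall>i<n. r i \<in> R) \<and> g = (\<Sum>i<n. r i * z i)"
    using span unfolding rspan_def by blast
  then obtain d where d: "\<forall>g\<in>max_ideal R. (\<forall>i<n. d g i \<in> R) \<and> g = (\<Sum>i<n. d g i * z i)"
    by (rule bchoice[elim_format]) blast
  note expansion = word_expansion[OF sa d[rule_format] f]
  define c where "c \<alpha> = (\<Sum>w\<in>{w\<in>words n (\<Sum>i<n. \<alpha> i). count_list w = \<alpha>}. word_coeff d f w $ 0)"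
    for \<alpha>
  have "psubst n z c $ m = f $ m" for m
  proof -
    have "order_ge (Suc m) (\<Sum>w\<in>words n (Suc m). word_coeff d f w * word_monom z w)"
    proof (intro order_ge_sum)
      fix w assume "w \<in> words n (Suc m)"
      then have "order_ge (Suc m) (word_monom z w)"
        using z0 order_ge_prod_list[of w z] by (auto simp: words_def word_monom_def)
      then show "order_ge (Suc m) (word_coeff d f w * word_monom z w)"
        using order_ge_mult[OF order_ge_0] by fastforce
    qed
    then have "(\<Sum>w\<in>words n (Suc m). word_coeff d f w * word_monom z w) $ m = 0"
      unfolding order_ge_def by simp
    then have "f $ m = (\<Sum>i<Suc m. \<Sum>w\<in>words n i. fps_const (word_coeff d f w $ 0) * word_monom z w) $ m"
      using arg_cong[OF expansion[of "Suc m"], of "\<lambda>g. g $ m"] by (simp only: fps_add_nth add_0_right)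
    also have "\<dots> = (\<Sum>j\<le>m. \<Sum>w\<in>words n j. word_coeff d f w $ 0 * word_monom z w $ m)"
      by (simp add: fps_sum_nth lessThan_Suc_atMost del: word_coeff.simps)
    finally show ?thesis unfolding c_def psubst_eq_word_sum by simp
  qed
  then show ?thesis by (intro range_eqI[of _ _ c] fps_ext) simp
qed

theorem mainTheorem14:
  fixes R :: "'a::field fps set"
    and n :: nat and y yt :: "nat \<Rightarrow> 'a fps"
  assumes "k_subalgebra R"
    and "fps_finite_over R"
    and "fps_birational R"
    and "minimal_generators R (max_ideal R) n y"
    and "\<forall>i<n. yt i \<in> R"
    and "\<forall>i<n. y i = yt i \<or> Max (HK_set R) + 1 \<le> subdegree (y i - yt i)"
  shows "R = power_series_subalg n yt"
proof -
  note sa = assms(1)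
  obtain C0 where "conductor_bound R C0" using conductor_bound_exists[OF assms(1-3)] .
  then have cond: "conductor_bound R (Suc C0)" by (rule conductor_bound_mono[rotated]) simp
  have gen: "generates R (max_ideal R) n y"
    using assms(4) unfolding minimal_generators_def by blast
  have yt: "yt i \<in> max_ideal R" "y i - yt i \<in> ideal_sq (max_ideal R)" if "i < n" for i
    using close_to_generator[OF sa cond _ _ _ assms(6)[rule_format, OF that]] gen assms(5) that
    by (auto simp: generates_def)
  have "max_ideal R \<subseteq> rspan R n yt"
    using yt(2) by (intro max_ideal_subset_rspan[OF sa cond _ gen]) auto
  then have "R \<subseteq> range (psubst n yt)"
    using yt(1) mem_range_psubst[OF sa] by (auto simp: max_ideal_def)
  moreover have "range (psubst n yt) \<subseteq> R"
    using psubst_mem[OF sa cond assms(5)] yt(1) by (auto simp: max_ideal_def)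
  ultimately show ?thesis unfolding power_series_subalg_def by blast
qed

end
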